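(* Assume the network is regular. Let $j^*\in\mathcal E$ and $m'\in\mathcal M$. Then $j^*\leadsto m'$ if and only if there exists a partial child selection $J^\vee:\mathcal M\setminus\{m'\}\to\mathcal E\setminus\{j^*\}$ (injective, with $m\vdash J^\vee(m)$ for all $m\ne m'$) such that the augmented set $\{j^*\}\cup J^\vee(\mathcal M\setminus\{m'\})$ selects an $S$-basis.
   Context: A reaction network consists of a finite set of metabolites $\mathcal M=\{1,\dots,M\}$ and a finite set of reactions $\mathcal E=\{1,\dots,E\}$. Each reaction $j$ has an input stoichiometric vector $y^j\in\mathbb R_{\ge0}^M$ and an output stoichiometric vector $\bar y^j\in\mathbb R_{\ge0}^M$. Write $m\vdash j$ iff $y^j_m\neq 0$. The stoichiometric matrix $S$ is the real $M\times E$ matrix whose $j$-th column is $S^j=\bar y^j-y^j$; it is assumed to have full rank $M$. The rate matrix $R=(r_{jm})$ is the $E\times M$ matrix whose entries $r_{jm}$ with $m\vdash j$ are independent indeterminates, and $r_{jm}=0$ whenever $m\not\vdash j$. "Nonzero algebraically" means nonzero as a polynomial/rational function in these indeterminates. For $\mathcal E'\subseteq\mathcal E$, $S^{\mathcal E'}$ denotes the submatrix of columns indexed by $\mathcal E'$; $\mathcal E'$ selects an $S$-basis if $|\mathcal E'|=M$ and $\det S^{\mathcal E'}\neq0$. A child selection is an injective map $J:\mathcal M\to\mathcal E$ with $m\vdash J(m)$ for all $m$. The network is regular if $\det(SR)\ne0$ algebraically. Let $B=\begin{pmatrix}-\mathrm{id}_{\mathcal E}&R\\ S&0\end{pmatrix}$,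 a square matrix with rows and columns indexed by the disjoint union $\mathcal E\sqcup\mathcal M$; for a regular network it is invertible over the field of rational functions in the $r_{jm}$. For $\alpha\in\mathcal E\sqcup\mathcal M$ set $z^\alpha=-B^{-1}e_\alpha$, and write $\alpha\leadsto\beta$ for $\beta\in\mathcal E\sqcup\mathcal M$ if $z^\alpha_\beta$ is nonzero algebraically. (For $j^*\in\mathcal E$, the $\mathcal M$-part of $z^{j^*}$ is $\delta x^{j^*}=-(SR)^{-1}Se_{j^*}$.) *)

theory Defs
  imports "HOL-Analysis.Analysis"
begin

text \<open>Reaction network: metabolites form a finite type 'm, reactions a finite type 'e.
  y j and ybar j are the input / output stoichiometric vectors of reaction j.\<close>

definition stoich :: "('e::finite \<Rightarrow> real^'m::finite) \<Rightarrow> ('e \<Rightarrow> real^'m) \<Rightarrow> real^'e^'m" where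
  "stoich y ybar = (\<chi> m j. ybar j $ m - y j $ m)"

definition vdash :: "('e::finite \<Rightarrow> real^'m::finite) \<Rightarrow> 'm \<Rightarrow> 'e \<Rightarrow> bool" where
  "vdash y m j \<longleftrightarrow> y j $ m \<noteq> 0"

text \<open>Polynomials / rational functions in the
  indeterminates are identified with the functions of the assignment (R is an infinite field),
  so "nonzero algebraically" becomes "nonzero at some assignment".\<close>

definition rate_matrix :: "('e::finite \<Rightarrow> real^'m::finite) \<Rightarrow> ('e \<Rightarrow> 'm \<Rightarrow> real) \<Rightarrow> real^'m^'e" where
  "rate_matrix y r = (\<chi> j m. if vdash y m j then r j m else 0)"

definition regular_network :: "('e::finite \<Rightarrow> real^'m::finite) \<Rightarrow> ('e \<Rightarrow> real^'m) \<Rightarrow> bool" where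
  "regular_network y ybar \<longleftrightarrow> (\<exists>r. det (stoich y ybar ** rate_matrix y r) \<noteq> 0)"

definition Bmat :: "('e::finite \<Rightarrow> real^'m::finite) \<Rightarrow> ('e \<Rightarrow> real^'m) \<Rightarrow> ('e \<Rightarrow> 'm \<Rightarrow> real)
    \<Rightarrow> real^('e + 'm)^('e + 'm)" where
  "Bmat y ybar r = (\<chi> a b. (case a of
       Inl j \<Rightarrow> (case b of Inl j' \<Rightarrow> (if j = j' then -1 else 0) | Inr m \<Rightarrow> rate_matrix y r $ j $ m)
     | Inr m \<Rightarrow> (case b of Inl j \<Rightarrow> stoich y ybar $ m $ j | Inr m' \<Rightarrow> 0)))"

definition zvec :: "('e::finite \<Rightarrow> real^'m::finite) \<Rightarrow> ('e \<Rightarrow> real^'m) \<Rightarrow> ('e \<Rightarrow> 'm \<Rightarrow> real)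
    \<Rightarrow> ('e + 'm) \<Rightarrow> real^('e + 'm)" where
  "zvec y ybar r \<alpha> = - (matrix_inv (Bmat y ybar r) *v axis \<alpha> 1)"

text \<open>alpha ~> beta: the rational function z^alpha_beta is nonzero, i.e. at some assignment
  where B is invertible its value is nonzero.\<close>
definition leadsto :: "('e::finite \<Rightarrow> real^'m::finite) \<Rightarrow> ('e \<Rightarrow> real^'m) \<Rightarrow> ('e + 'm) \<Rightarrow> ('e + 'm) \<Rightarrow> bool" where
  "leadsto y ybar \<alpha> \<beta> \<longleftrightarrow>
     (\<exists>r. invertible (Bmat y ybar r) \<and> zvec y ybar r \<alpha> $ \<beta> \<noteq> 0)"

definition selects_S_basis :: "real^'e::finite^'m::finite \<Rightarrow> 'e set \<Rightarrow> bool" where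
  "selects_S_basis S E' \<longleftrightarrow> card E' = CARD('m) \<and>
     (\<exists>f :: 'm \<Rightarrow> 'e. bij_betw f UNIV E' \<and> det (\<chi> i k. S $ i $ f k) \<noteq> 0)"

end

theory Submission
  imports Defs "HOL-Computational_Algebra.Polynomial"
begin

text \<open>
  Split a vector on the index set E + M into its parts (u, x). Then B z = -e_j is the system
  u = R x + e_j, S u = 0, so B is invertible exactly when SR is, and the M-part of z^j solves
  (SR) x = -S e_j. By Cramer's rule, x_m det (SR) = det (S C), where C is R with its m-th column
  replaced by -e_j. Expanding det (S C) multilinearly in the columns of C gives the sum over all
  f : M -> E of (prod_k C_{f k, k}) det S^f, and the coefficient of f can only be nonzero if
  f m = j and k |- f k for k /= m. Conversely, if such an f has det S^f /= 0, then at the rates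
  r_{j' k} = [j' = f k] only the term of f survives. Restricted to the line through this
  assignment and a regular one, det (SR) and det (S C) are nonzero univariate polynomials, so both
  are nonzero at a common assignment.
\<close>

lemma matrix_vector_mult_uminus_right:
  fixes A :: "'a::ring_1^'n::finite^'m::finite"
  shows "A *v (- x) = - (A *v x)"
  using matrix_vector_mult_diff_distrib[of A 0 x] by simp

lemma invertible_iff_ker_trivial:
  fixes A :: "'a::field^'n::finite^'n"
  shows "invertible A \<longleftrightarrow> (\<forall>x. A *v x = 0 \<longrightarrow> x = 0)"
  by (simp add: invertible_left_inverse matrix_left_invertible_ker)

definition replace_column :: "'n \<Rightarrow> 'a^'m \<Rightarrow> 'a^'n^'m \<Rightarrow> 'a^'n^'m" where
  "replace_column k v A = (\<chi> i l. if l = k then v $ i else A $ i $ l)"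

lemma matrix_mult_replace_column:
  fixes A :: "'a::semiring_1^'e::finite^'m"
  shows "A ** replace_column k v B = replace_column k (A *v v) (A ** B)"
  by (simp add: vec_eq_iff replace_column_def matrix_matrix_mult_def matrix_vector_mult_def)

lemma det_replace_column_mult:
  fixes A :: "'a::field^'n::finite^'n"
  shows "det (replace_column k (A *v x) A) = x $ k * det A"
  unfolding replace_column_def by (rule cramer_lemma)

definition select_columns :: "'a^'e^'m \<Rightarrow> ('k \<Rightarrow> 'e) \<Rightarrow> 'a^'k^'m" where
  "select_columns A f = (\<chi> i k. A $ i $ f k)"

lemma det_matrix_mult_sum_select_columns:
  fixes A :: "'a::comm_ring_1^'e::finite^'m::finite" and C :: "'a^'m^'e"
  shows "det (A ** C) = (\<Sum>f\<in>UNIV. (\<Prod>k\<in>UNIV. C $ f k $ k) * det (select_columns A f))"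
proof -
  let ?P = "{p. p permutes (UNIV :: 'm set)}"
  have "det (A ** C) = det (transpose (A ** C))"
    by simp
  also have "\<dots> = (\<Sum>p\<in>?P. of_int (sign p) * (\<Prod>k\<in>UNIV. \<Sum>j\<in>UNIV. C $ j $ k * A $ p k $ j))"
    by (simp add: det_def transpose_def matrix_matrix_mult_def mult.commute)
  also have "\<dots> = (\<Sum>p\<in>?P. of_int (sign p) *
                    (\<Sum>f\<in>UNIV. \<Prod>k\<in>UNIV. C $ f k $ k * A $ p k $ f k))"
    by (simp add: prod_sum_PiE[of "UNIV :: 'm set" "\<lambda>_. UNIV :: 'e set", simplified])
  also have "\<dots> = (\<Sum>f\<in>UNIV. (\<Prod>k\<in>UNIV. C $ f k $ k) *
                    (\<Sum>p\<in>?P. of_int (sign p) * (\<Prod>k\<in>UNIV. A $ p k $ f k)))"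
    by (simp add: sum_distrib_left prod.distrib mult.left_commute sum.swap[of _ ?P])
  also have "\<dots> = (\<Sum>f\<in>UNIV. (\<Prod>k\<in>UNIV. C $ f k $ k) * det (transpose (select_columns A f)))"
    by (simp add: det_def transpose_def select_columns_def)
  finally show ?thesis
    by simp
qed

lemma inj_if_det_select_columns_nonzero:
  fixes A :: "'a::comm_ring_1^'e^'m::finite"
  assumes "det (select_columns A f) \<noteq> 0"
  shows "inj f"
proof (rule injI, rule ccontr)
  fix k l assume "f k = f l" "k \<noteq> l"
  then have "column k (select_columns A f) = column l (select_columns A f)"
    by (simp add: column_def select_columns_def)
  with \<open>k \<noteq> l\<close> show False
    using assms det_identical_columns by blast
qed

lemma det_select_columns_permute:
  fixes A :: "'a::comm_ring_1^'e^'m::finite"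
  assumes "p permutes UNIV"
  shows "det (select_columns A (f \<circ> p)) = of_int (sign p) * det (select_columns A f)"
  using det_permute_columns[OF assms, of "select_columns A f"]
  by (simp add: select_columns_def)

lemma det_affine_eq_poly:
  fixes A B :: "real^'n::finite^'n"
  shows "\<exists>p. \<forall>t. det (A + t *\<^sub>R B) = poly p t"
proof -
  define p where "p = (\<Sum>\<pi>\<in>{\<pi>. \<pi> permutes (UNIV :: 'n set)}.
      smult (of_int (sign \<pi>)) (\<Prod>i\<in>UNIV. [:A $ i $ \<pi> i, B $ i $ \<pi> i:]))"
  have "det (A + t *\<^sub>R B) = poly p t" for t
    by (simp add: det_def p_def poly_sum poly_prod algebra_simps)
  then show ?thesis
    by blast
qed

lemma ex_det_affine_both_nonzero:
  fixes A B :: "real^'n::finite^'n" and C D :: "real^'k::finite^'k"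
  assumes "det (A + a *\<^sub>R B) \<noteq> 0" and "det (C + c *\<^sub>R D) \<noteq> 0"
  shows "\<exists>t. det (A + t *\<^sub>R B) \<noteq> 0 \<and> det (C + t *\<^sub>R D) \<noteq> 0"
proof -
  obtain p where p: "\<And>t. det (A + t *\<^sub>R B) = poly p t"
    using det_affine_eq_poly by blast
  obtain q where q: "\<And>t. det (C + t *\<^sub>R D) = poly q t"
    using det_affine_eq_poly by blast
  have "p * q \<noteq> 0"
    using assms by (auto simp: p q)
  then have "finite {t. poly (p * q) t = 0}"
    by (rule poly_roots_finite)
  then obtain t where "poly (p * q) t \<noteq> 0"
    using ex_new_if_finite[OF infinite_UNIV_char_0] by blast
  then show ?thesis
    by (auto simp: p q)
qed

section \<open>Block structure of B\<close>

definition vec_join :: "'a^'b::finite \<Rightarrow> 'a^'c::finite \<Rightarrow> 'a^('b + 'c)" where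
  "vec_join u x = (\<chi> a. case a of Inl j \<Rightarrow> u $ j | Inr m \<Rightarrow> x $ m)"

lemma vec_join_nth [simp]:
  "vec_join u x $ Inl j = u $ j"
  "vec_join u x $ Inr m = x $ m"
  by (simp_all add: vec_join_def)

lemma vec_join_components: "vec_join (\<chi> j. z $ Inl j) (\<chi> m. z $ Inr m) = z"
  by (simp add: vec_eq_iff split_sum_all)

lemma vec_join_eq_iff [simp]: "vec_join u x = vec_join u' x' \<longleftrightarrow> u = u' \<and> x = x'"
  by (simp add: vec_eq_iff split_sum_all)

lemma vec_join_eq_0_iff [simp]: "vec_join u x = 0 \<longleftrightarrow> u = 0 \<and> x = 0"
  by (simp add: vec_eq_iff split_sum_all)

lemma uminus_vec_join: "- vec_join u x = vec_join (- u) (- x)"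
  by (simp add: vec_eq_iff split_sum_all)

lemma axis_Inl: "axis (Inl j) c = vec_join (axis j c) 0"
  by (simp add: vec_eq_iff split_sum_all axis_def)

lemma sum_UNIV_sum_type:
  "(\<Sum>a\<in>UNIV. f a) = (\<Sum>j\<in>UNIV. f (Inl j)) + (\<Sum>m\<in>UNIV. f (Inr m))"
  for f :: "'b::finite + 'c::finite \<Rightarrow> 'a::comm_monoid_add"
  using sum.Plus[of UNIV UNIV f] by (simp add: UNIV_Plus_UNIV comp_def)

lemma Bmat_mult_vec_join:
  "Bmat y ybar r *v vec_join u x
     = vec_join (rate_matrix y r *v x - u) (stoich y ybar *v u)"
proof -
  have "(if j = j' then -1 else 0) * u $ j' = (if j = j' then - u $ j' else 0)" for j j'
    by simp
  then show ?thesis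
    by (simp add: vec_eq_iff split_sum_all matrix_vector_mult_def Bmat_def sum_UNIV_sum_type)
qed

lemma invertible_Bmat_iff:
  "invertible (Bmat y ybar r) \<longleftrightarrow> det (stoich y ybar ** rate_matrix y r) \<noteq> 0"
proof -
  let ?S = "stoich y ybar" and ?R = "rate_matrix y r" and ?B = "Bmat y ybar r"
  have "invertible ?B \<longleftrightarrow> (\<forall>u x. ?B *v vec_join u x = 0 \<longrightarrow> vec_join u x = 0)"
    unfolding invertible_iff_ker_trivial by (metis vec_join_components)
  also have "\<dots> \<longleftrightarrow> (\<forall>u x. ?R *v x = u \<and> ?S *v u = 0 \<longrightarrow> u = 0 \<and> x = 0)"
    by (simp add: Bmat_mult_vec_join)
  also have "\<dots> \<longleftrightarrow> (\<forall>x. (?S ** ?R) *v x = 0 \<longrightarrow> x = 0)"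
    by (auto simp: matrix_vector_mul_assoc)
  also have "\<dots> \<longleftrightarrow> det (?S ** ?R) \<noteq> 0"
    using invertible_iff_ker_trivial invertible_det_nz by blast
  finally show ?thesis .
qed

lemma stoich_rate_mult_zvec:
  assumes "invertible (Bmat y ybar r)"
  shows "(stoich y ybar ** rate_matrix y r) *v (\<chi> m. zvec y ybar r (Inl j) $ Inr m)
           = - column j (stoich y ybar)"
proof -
  let ?S = "stoich y ybar" and ?R = "rate_matrix y r" and ?B = "Bmat y ybar r"
  define u where "u = (\<chi> i. zvec y ybar r (Inl j) $ Inl i)"
  define x where "x = (\<chi> m. zvec y ybar r (Inl j) $ Inr m)"
  have "?B ** matrix_inv ?B = mat 1"
    using assms unfolding invertible_def matrix_inv_def by (rule someI2_ex) auto
  then have "?B *v zvec y ybar r (Inl j) = - axis (Inl j) 1"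
    by (simp add: zvec_def matrix_vector_mul_assoc matrix_vector_mult_uminus_right)
  then have "?B *v vec_join u x = vec_join (- axis j 1) 0"
    by (simp add: u_def x_def vec_join_components axis_Inl uminus_vec_join)
  then have "u = ?R *v x + axis j 1" and "?S *v u = 0"
    by (auto simp: Bmat_mult_vec_join algebra_simps)
  then have "(?S ** ?R) *v x + ?S *v axis j 1 = 0"
    by (simp add: matrix_vector_right_distrib matrix_vector_mul_assoc)
  then show ?thesis
    by (simp add: x_def matrix_vector_mult_basis eq_neg_iff_add_eq_0)
qed

section \<open>Augmented rate matrix and child selections\<close>

definition augmented_rate_matrix ::
    "('e::finite \<Rightarrow> real^'m::finite) \<Rightarrow> ('e \<Rightarrow> 'm \<Rightarrow> real) \<Rightarrow> 'e \<Rightarrow> 'm \<Rightarrow> real^'m^'e" where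
  "augmented_rate_matrix y r j m = replace_column m (- axis j 1) (rate_matrix y r)"

lemma augmented_rate_matrix_nth:
  "augmented_rate_matrix y r j m $ j' $ k =
     (if k = m then (if j' = j then -1 else 0) else if vdash y k j' then r j' k else 0)"
  by (simp add: augmented_rate_matrix_def replace_column_def rate_matrix_def axis_def)

lemma det_stoich_mult_augmented:
  assumes "invertible (Bmat y ybar r)"
  shows "det (stoich y ybar ** augmented_rate_matrix y r j m)
           = zvec y ybar r (Inl j) $ Inr m * det (stoich y ybar ** rate_matrix y r)"
proof -
  let ?S = "stoich y ybar" and ?R = "rate_matrix y r"
  have "?S ** augmented_rate_matrix y r j m = replace_column m (- column j ?S) (?S ** ?R)"
    by (simp add: augmented_rate_matrix_def matrix_mult_replace_column
        matrix_vector_mult_uminus_right matrix_vector_mult_basis)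
  also have "\<dots> = replace_column m ((?S ** ?R) *v (\<chi> m. zvec y ybar r (Inl j) $ Inr m)) (?S ** ?R)"
    by (simp add: stoich_rate_mult_zvec[OF assms])
  finally show ?thesis
    by (simp add: det_replace_column_mult)
qed

lemma leadsto_Inl_Inr_iff:
  "leadsto y ybar (Inl j) (Inr m) \<longleftrightarrow>
     (\<exists>r. det (stoich y ybar ** rate_matrix y r) \<noteq> 0 \<and>
          det (stoich y ybar ** augmented_rate_matrix y r j m) \<noteq> 0)"
  unfolding leadsto_def using invertible_Bmat_iff det_stoich_mult_augmented by fastforce

lemma selects_S_basis_range_iff:
  fixes S :: "real^'e::finite^'m::finite" and f :: "'m \<Rightarrow> 'e"
  shows "selects_S_basis S (range f) \<longleftrightarrow> det (select_columns S f) \<noteq> 0"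
proof
  assume "selects_S_basis S (range f)"
  then obtain g where g: "bij_betw g UNIV (range f)" "det (select_columns S g) \<noteq> 0"
      and card: "card (range f) = CARD('m)"
    unfolding selects_S_basis_def select_columns_def by blast
  have "inj f"
    using card by (simp add: inj_on_iff_eq_card)
  define p where "p = inv_into UNIV g \<circ> f"
  have f_eq: "f = g \<circ> p"
    using g(1) by (auto simp: p_def bij_betw_def f_inv_into_f)
  then have "inj p"
    using \<open>inj f\<close> by (metis inj_on_imageI2)
  then have "p permutes UNIV"
    by (intro inj_imp_permutes) auto
  then show "det (select_columns S f) \<noteq> 0"
    using g(2) by (simp add: f_eq det_select_columns_permute)
next
  assume "det (select_columns S f) \<noteq> 0"
  moreover from this have "inj f"
    by (rule inj_if_det_select_columns_nonzero)
  ultimately show "selects_S_basis S (range f)"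
    unfolding selects_S_basis_def select_columns_def
    by (auto simp: card_image intro!: exI[of _ f] inj_on_imp_bij_betw)
qed

lemma ex_partial_child_selection_iff:
  fixes S :: "real^'e::finite^'m::finite"
  shows "(\<exists>J :: 'm \<Rightarrow> 'e. inj_on J (UNIV - {m'}) \<and>
            (\<forall>m. m \<noteq> m' \<longrightarrow> J m \<noteq> j \<and> vdash y m (J m)) \<and>
            selects_S_basis S (insert j (J ` (UNIV - {m'}))))
     \<longleftrightarrow> (\<exists>f. f m' = j \<and> (\<forall>m. m \<noteq> m' \<longrightarrow> vdash y m (f m)) \<and>
            det (select_columns S f) \<noteq> 0)"
proof
  assume "\<exists>J :: 'm \<Rightarrow> 'e. inj_on J (UNIV - {m'}) \<and>
            (\<forall>m. m \<noteq> m' \<longrightarrow> J m \<noteq> j \<and> vdash y m (J m)) \<and>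
            selects_S_basis S (insert j (J ` (UNIV - {m'})))"
  then obtain J :: "'m \<Rightarrow> 'e" where J: "\<forall>m. m \<noteq> m' \<longrightarrow> vdash y m (J m)"
      and basis: "selects_S_basis S (insert j (J ` (UNIV - {m'})))"
    by blast
  have "insert j (J ` (UNIV - {m'})) = range (J(m' := j))"
    by auto
  then show "\<exists>f. f m' = j \<and> (\<forall>m. m \<noteq> m' \<longrightarrow> vdash y m (f m)) \<and>
               det (select_columns S f) \<noteq> 0"
    using J basis selects_S_basis_range_iff by (metis fun_upd_same fun_upd_other)
next
  assume "\<exists>f. f m' = j \<and> (\<forall>m. m \<noteq> m' \<longrightarrow> vdash y m (f m)) \<and>
            det (select_columns S f) \<noteq> 0"
  then obtain f where f: "f m' = j" "\<forall>m. m \<noteq> m' \<longrightarrow> vdash y m (f m)"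
      and det: "det (select_columns S f) \<noteq> 0"
    by blast
  have "inj f"
    using det by (rule inj_if_det_select_columns_nonzero)
  moreover have "insert j (f ` (UNIV - {m'})) = range f"
    using f(1) by auto
  ultimately show "\<exists>J :: 'm \<Rightarrow> 'e. inj_on J (UNIV - {m'}) \<and>
            (\<forall>m. m \<noteq> m' \<longrightarrow> J m \<noteq> j \<and> vdash y m (J m)) \<and>
            selects_S_basis S (insert j (J ` (UNIV - {m'})))"
    using f det selects_S_basis_range_iff
    by (intro exI[of _ f]) (auto intro: inj_on_subset simp: inj_eq)
qed

lemma child_selection_if_det_augmented_nonzero:
  fixes S :: "real^'e::finite^'m::finite"
  assumes "det (S ** augmented_rate_matrix y r j m) \<noteq> 0"
  shows "\<exists>f. f m = j \<and> (\<forall>k. k \<noteq> m \<longrightarrow> vdash y k (f k)) \<and> det (select_columns S f) \<noteq> 0"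
proof -
  obtain f :: "'m \<Rightarrow> 'e"
    where f: "(\<Prod>k\<in>UNIV. augmented_rate_matrix y r j m $ f k $ k) * det (select_columns S f) \<noteq> 0"
    using assms unfolding det_matrix_mult_sum_select_columns by (meson sum.neutral)
  then have nz: "augmented_rate_matrix y r j m $ f k $ k \<noteq> 0" for k
    by auto
  have "f m = j"
    using nz[of m] by (auto simp: augmented_rate_matrix_nth split: if_splits)
  moreover have "vdash y k (f k)" if "k \<noteq> m" for k
    using nz[of k] that by (auto simp: augmented_rate_matrix_nth split: if_splits)
  ultimately show ?thesis
    using f by auto
qed

lemma det_augmented_at_child_selection:
  fixes S :: "real^'e::finite^'m::finite"
  assumes "f m = j" and "\<forall>k. k \<noteq> m \<longrightarrow> vdash y k (f k)"
  shows "det (S ** augmented_rate_matrix y (\<lambda>j' k. if j' = f k then 1 else 0) j m)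
           = - det (select_columns S f)"
proof -
  let ?C = "augmented_rate_matrix y (\<lambda>j' k. if j' = f k then 1 else 0) j m"
  have "(\<Prod>k\<in>UNIV. ?C $ g k $ k) * det (select_columns S g)
          = (if g = f then - det (select_columns S g) else 0)" for g
  proof (cases "g = f")
    case True
    then have "?C $ g k $ k = (if k = m then -1 else 1)" for k
      using assms by (simp add: augmented_rate_matrix_nth)
    with True show ?thesis
      by (simp add: prod.delta)
  next
    case False
    then obtain k where "g k \<noteq> f k"
      by auto
    then have "?C $ g k $ k = 0"
      using assms(1) by (auto simp: augmented_rate_matrix_nth)
    with False show ?thesis
      by (auto simp: prod_zero_iff)
  qed
  then show ?thesis
    by (simp add: det_matrix_mult_sum_select_columns sum.delta')
qed

lemma ex_rates_dets_nonzero_iff_child_selection: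
  assumes "regular_network y ybar"
  shows "(\<exists>r. det (stoich y ybar ** rate_matrix y r) \<noteq> 0 \<and>
              det (stoich y ybar ** augmented_rate_matrix y r j m) \<noteq> 0)
     \<longleftrightarrow> (\<exists>f. f m = j \<and> (\<forall>k. k \<noteq> m \<longrightarrow> vdash y k (f k)) \<and>
              det (select_columns (stoich y ybar) f) \<noteq> 0)"
proof
  assume "\<exists>r. det (stoich y ybar ** rate_matrix y r) \<noteq> 0 \<and>
              det (stoich y ybar ** augmented_rate_matrix y r j m) \<noteq> 0"
  then show "\<exists>f. f m = j \<and> (\<forall>k. k \<noteq> m \<longrightarrow> vdash y k (f k)) \<and>
              det (select_columns (stoich y ybar) f) \<noteq> 0"
    using child_selection_if_det_augmented_nonzero by blast
next
  let ?S = "stoich y ybar" and ?R = "rate_matrix y" and ?C = "\<lambda>r. augmented_rate_matrix y r j m"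
  assume "\<exists>f. f m = j \<and> (\<forall>k. k \<noteq> m \<longrightarrow> vdash y k (f k)) \<and>
              det (select_columns ?S f) \<noteq> 0"
  then obtain f where f: "f m = j" "\<forall>k. k \<noteq> m \<longrightarrow> vdash y k (f k)"
      and det_f: "det (select_columns ?S f) \<noteq> 0"
    by blast
  define r1 where "r1 = (\<lambda>j' k. if j' = f k then 1 else (0::real))"
  obtain r0 where r0: "det (?S ** ?R r0) \<noteq> 0"
    using assms unfolding regular_network_def by blast
  have r1: "det (?S ** ?C r1) \<noteq> 0"
    using det_augmented_at_child_selection[OF f] det_f by (simp add: r1_def)
  define r where "r t = (\<lambda>j' k. r0 j' k + t * (r1 j' k - r0 j' k))" for t
  have "?R (r t) = ?R r0 + t *\<^sub>R (?R r1 - ?R r0)" for t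
    by (simp add: vec_eq_iff r_def rate_matrix_def)
  then have R_line: "?S ** ?R (r t) = ?S ** ?R r0 + t *\<^sub>R (?S ** (?R r1 - ?R r0))" for t
    by (simp add: matrix_add_ldistrib matrix_scalar_ac scalar_matrix_assoc)
  have "?C (r t) = ?C r0 + t *\<^sub>R (?C r1 - ?C r0)" for t
    by (simp add: vec_eq_iff r_def augmented_rate_matrix_nth)
  then have C_line: "?S ** ?C (r t) = ?S ** ?C r0 + t *\<^sub>R (?S ** (?C r1 - ?C r0))" for t
    by (simp add: matrix_add_ldistrib matrix_scalar_ac scalar_matrix_assoc)
  have "det (?S ** ?R r0 + 0 *\<^sub>R (?S ** (?R r1 - ?R r0))) \<noteq> 0"
    using r0 by simp
  moreover have "det (?S ** ?C r0 + 1 *\<^sub>R (?S ** (?C r1 - ?C r0))) \<noteq> 0"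
    using r1 by (simp add: matrix_add_ldistrib[symmetric])
  ultimately obtain t where "det (?S ** ?R (r t)) \<noteq> 0" "det (?S ** ?C (r t)) \<noteq> 0"
    unfolding R_line C_line by (metis ex_det_affine_both_nonzero)
  then show "\<exists>r. det (?S ** ?R r) \<noteq> 0 \<and> det (?S ** ?C r) \<noteq> 0"
    by blast
qed

theorem theorem2p3:
  fixes y ybar :: "'e::finite \<Rightarrow> real^'m::finite"
    and jstar :: 'e and m' :: 'm
  assumes "\<And>j m. y j $ m \<ge> 0"
    and "\<And>j m. ybar j $ m \<ge> 0"
    and "rank (stoich y ybar) = CARD('m)"
    and "regular_network y ybar"
  shows "leadsto y ybar (Inl jstar) (Inr m') \<longleftrightarrow>
    (\<exists>J :: 'm \<Rightarrow> 'e. inj_on J (UNIV - {m'}) \<and>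
       (\<forall>m. m \<noteq> m' \<longrightarrow> J m \<noteq> jstar \<and> vdash y m (J m)) \<and>
       selects_S_basis (stoich y ybar) (insert jstar (J ` (UNIV - {m'}))))"
proof -
  show ?thesis
    unfolding leadsto_Inl_Inr_iff ex_rates_dets_nonzero_iff_child_selection[OF assms(4)]
      ex_partial_child_selection_iff ..
qed

end
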